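(* Assume the alphabet $\Sigma$ contains at least two characters. The substring complexity $\delta$ satisfies the following lower bounds on its sensitivity: substitutions: $\mathsf{MS}_{\mathrm{sub}}(\delta,n) \geq 2$ and $\mathsf{AS}_{\mathrm{sub}}(\delta,n) \geq 1$; insertions: $\mathsf{MS}_{\mathrm{ins}}(\delta,n) \geq 2$ and $\mathsf{AS}_{\mathrm{ins}}(\delta,n) \geq 1$; deletions: $\liminf_{n\to\infty}\mathsf{MS}_{\mathrm{del}}(\delta,n) \geq 1.5$ and $\liminf_{n\to\infty}\mathsf{AS}_{\mathrm{del}}(\delta,n) \geq 1$.
   Context: Strings are finite sequences over an alphabet $\Sigma$; $\Sigma^n$ is the set of strings of length $n$. $\mathsf{ed}(T,S)$ is the edit distance (minimum number of single-character substitutions, insertions, deletions turning $T$ into $S$). For a measure $C$ assigning a number $C(T)$ to each string, define $\mathsf{MS}_{\mathrm{sub}}(C,n)=\max_{T\in\Sigma^n}\{C(T')/C(T): T'\in\Sigma^n,\ \mathsf{ed}(T,T')=1\}$, $\mathsf{MS}_{\mathrm{ins}}(C,n)$ and $\mathsf{MS}_{\mathrm{del}}(C,n)$ the same with $T'\in\Sigma^{n+1}$, resp. $T'\in\Sigma^{n-1}$; and $\mathsf{AS}_{\mathrm{sub}},\mathsf{AS}_{\mathrm{ins}},\mathsf{AS}_{\mathrm{del}}$ the same with $C(T')-C(T)$ in place of $C(T')/C(T)$. For a string $T$ of length $n$, $\mathsf{Substr}(T,k)$ is the number of distinct substrings of length $k$ of $T$, and the substring complexity is $\delta(T)=\max_{1\le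 k\le n}\mathsf{Substr}(T,k)/k$. *)

theory Defs
  imports Complex_Main "HOL-Library.Extended_Real" "HOL-Library.Liminf_Limsup"
begin

definition strs :: "'a set \<Rightarrow> nat \<Rightarrow> 'a list set" where
  "strs \<Sigma> n = {T. length T = n \<and> set T \<subseteq> \<Sigma>}"

fun ed :: "'a list \<Rightarrow> 'a list \<Rightarrow> nat" where
  "ed [] ys = length ys"
| "ed xs [] = length xs"
| "ed (x # xs) (y # ys) =
     min (min (ed xs (y # ys) + 1) (ed (x # xs) ys + 1))
         (ed xs ys + (if x = y then 0 else 1))"

definition Substr :: "'a list \<Rightarrow> nat \<Rightarrow> nat" where
  "Substr T k = card {take k (drop i T) | i. i + k \<le> length T}"

definition delta :: "'a list \<Rightarrow> real" where
  "delta T = (if T = [] then 0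
              else Max ((\<lambda>k. real (Substr T k) / real k) ` {1..length T}))"

text \<open>Sensitivities, as suprema in the extended reals (maxima when the alphabet is finite).\<close>
definition MS_sub :: "('a list \<Rightarrow> real) \<Rightarrow> 'a set \<Rightarrow> nat \<Rightarrow> ereal" where
  "MS_sub C \<Sigma> n = (SUP P \<in> {(T, T'). T \<in> strs \<Sigma> n \<and> T' \<in> strs \<Sigma> n \<and> ed T T' = 1}.
                      ereal (C (snd P) / C (fst P)))"

definition MS_ins :: "('a list \<Rightarrow> real) \<Rightarrow> 'a set \<Rightarrow> nat \<Rightarrow> ereal" where
  "MS_ins C \<Sigma> n = (SUP P \<in> {(T, T'). T \<in> strs \<Sigma> n \<and> T' \<in> strs \<Sigma> (n + 1) \<and> ed T T' = 1}.
                      ereal (C (snd P) / C (fst P)))"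

definition MS_del :: "('a list \<Rightarrow> real) \<Rightarrow> 'a set \<Rightarrow> nat \<Rightarrow> ereal" where
  "MS_del C \<Sigma> n = (SUP P \<in> {(T, T'). T \<in> strs \<Sigma> n \<and> T' \<in> strs \<Sigma> (n - 1) \<and> ed T T' = 1}.
                      ereal (C (snd P) / C (fst P)))"

definition AS_sub :: "('a list \<Rightarrow> real) \<Rightarrow> 'a set \<Rightarrow> nat \<Rightarrow> ereal" where
  "AS_sub C \<Sigma> n = (SUP P \<in> {(T, T'). T \<in> strs \<Sigma> n \<and> T' \<in> strs \<Sigma> n \<and> ed T T' = 1}.
                      ereal (C (snd P) - C (fst P)))"

definition AS_ins :: "('a list \<Rightarrow> real) \<Rightarrow> 'a set \<Rightarrow> nat \<Rightarrow> ereal" where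
  "AS_ins C \<Sigma> n = (SUP P \<in> {(T, T'). T \<in> strs \<Sigma> n \<and> T' \<in> strs \<Sigma> (n + 1) \<and> ed T T' = 1}.
                      ereal (C (snd P) - C (fst P)))"

definition AS_del :: "('a list \<Rightarrow> real) \<Rightarrow> 'a set \<Rightarrow> nat \<Rightarrow> ereal" where
  "AS_del C \<Sigma> n = (SUP P \<in> {(T, T'). T \<in> strs \<Sigma> n \<and> T' \<in> strs \<Sigma> (n - 1) \<and> ed T T' = 1}.
                      ereal (C (snd P) - C (fst P)))"

end

theory Submission
  imports Defs
begin

text \<open>Fix two letters \<open>a \<noteq> b\<close>. For substitutions and insertions compare \<open>a\<^sup>n\<close>, whose
  substring complexity is \<open>1\<close>, with \<open>b a\<^sup>n\<^sup>-\<^sup>1\<close> or \<open>b a\<^sup>n\<close>, which contain two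
  distinct letters and hence have complexity at least \<open>2\<close>.

  For deletions take \<open>T = 0\<^sup>k (011)\<^sup>2\<^sup>k 0\<dots>0\<close>. It has at most \<open>2m\<close> distinct
  substrings of each length \<open>m\<close>, so \<open>\<delta>(T) \<le> 2\<close>. Deleting the zero at position \<open>4k\<close>
  creates a single occurrence of \<open>1111\<close>; the length-\<open>k\<close> windows of the result
  that meet the leading zeros, that contain \<open>1111\<close>, or that meet the trailing zeros
  are then pairwise distinct, so \<open>\<delta>(T') \<ge> 3 - 6/k\<close>. Letting \<open>k \<rightarrow> \<infinity>\<close> yields the
  bounds \<open>3/2\<close> and \<open>1\<close> on the limits inferior.\<close>

lemma ed_self: "ed xs xs = 0"
  by (induction xs) auto

lemma ed_eq_0_iff: "ed xs ys = 0 \<longleftrightarrow> xs = ys"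
proof
  show "ed xs ys = 0 \<Longrightarrow> xs = ys"
    by (induction xs ys rule: ed.induct) (auto split: if_splits simp: min_def)
qed (simp add: ed_self)

lemma ed_append_left_le: "ed (xs @ ys) (xs @ zs) \<le> ed ys zs"
  by (induction xs) auto

lemma ed_eq_1I: "ed xs ys \<le> 1 \<Longrightarrow> xs \<noteq> ys \<Longrightarrow> ed xs ys = 1"
  using ed_eq_0_iff[of xs ys] by linarith

lemma ed_delete: "ed (xs @ c # ys) (xs @ ys) = 1"
proof (rule ed_eq_1I)
  have "ed (c # ys) ys \<le> 1"
    by (cases ys) (auto simp: ed_self)
  then show "ed (xs @ c # ys) (xs @ ys) \<le> 1"
    using ed_append_left_le[of xs "c # ys" ys] by linarith
qed simp

lemma ed_insert: "ed (xs @ ys) (xs @ d # ys) = 1"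
proof (rule ed_eq_1I)
  have "ed ys (d # ys) \<le> 1"
    by (cases ys) (auto simp: ed_self)
  then show "ed (xs @ ys) (xs @ d # ys) \<le> 1"
    using ed_append_left_le[of xs ys "d # ys"] by linarith
qed simp

lemma ed_substitute: "c \<noteq> d \<Longrightarrow> ed (xs @ c # ys) (xs @ d # ys) = 1"
  using ed_append_left_le[of xs "c # ys" "d # ys"] by (intro ed_eq_1I) (auto simp: ed_self)

lemma Substr_map_inj:
  assumes "inj h"
  shows "Substr (map h w) k = Substr w k"
proof -
  have "{take k (drop i (map h w)) | i. i + k \<le> length (map h w)}
      = map h ` {take k (drop i w) | i. i + k \<le> length w}"
    by (auto simp: take_map drop_map)
  moreover have "inj_on (map h) X" for X
    using assms by (meson inj_mapI inj_on_subset subset_UNIV)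
  ultimately show ?thesis
    unfolding Substr_def by (simp add: card_image)
qed

lemma delta_map_inj: "inj h \<Longrightarrow> delta (map h w) = delta w"
  unfolding delta_def by (simp add: Substr_map_inj)

lemma Substr_div_le_delta:
  assumes "1 \<le> k" "k \<le> length w"
  shows "real (Substr w k) / real k \<le> delta w"
  unfolding delta_def using assms by (auto intro!: Max_ge)

lemma delta_leI:
  assumes "w \<noteq> []" "\<And>k. 1 \<le> k \<Longrightarrow> k \<le> length w \<Longrightarrow> real (Substr w k) \<le> c * real k"
  shows "delta w \<le> c"
  unfolding delta_def using assms
  by (auto intro!: Max.boundedI simp: divide_le_eq Suc_le_eq)

lemma Substr_1: "Substr w 1 = card (set w)"
proof -
  have "take 1 (drop i w) = [w ! i]" if "i < length w" for i
    using that by (simp add: take_Suc_conv_app_nth)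
  then have "{take 1 (drop i w) | i. i + 1 \<le> length w} = (\<lambda>x. [x]) ` set w"
    by (auto simp: set_conv_nth Suc_le_eq) metis
  then show ?thesis
    unfolding Substr_def by (simp add: card_image inj_on_def)
qed

lemma card_set_le_delta: "w \<noteq> [] \<Longrightarrow> real (card (set w)) \<le> delta w"
  using Substr_div_le_delta[of 1 w] Substr_1[of w] by (simp add: Suc_le_eq)

lemma delta_pos: "w \<noteq> [] \<Longrightarrow> 0 < delta w"
  using card_set_le_delta[of w] card_gt_0_iff[of "set w"] by simp

lemma Substr_replicate_le: "Substr (replicate n a) k \<le> 1"
proof -
  have "{take k (drop i (replicate n a)) | i. i + k \<le> length (replicate n a)} \<subseteq> {replicate k a}"
    by auto
  then show ?thesis
    unfolding Substr_def using card_mono[of "{replicate k a}"] by fastforce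
qed

lemma delta_replicate_le: "delta (replicate n a) \<le> 1"
proof (cases n)
  case (Suc m)
  have "real (Substr (replicate n a) k) \<le> 1 * real k" if "1 \<le> k" for k
    using Substr_replicate_le[of n a k] that by simp
  with Suc show ?thesis
    by (intro delta_leI) auto
qed (simp add: delta_def)

lemma two_le_delta_Cons_replicate:
  assumes "a \<noteq> b" "0 < m"
  shows "2 \<le> delta (b # replicate m a)"
proof -
  have "set (b # replicate m a) = {b, a}"
    using assms(2) by simp
  then show ?thesis
    using card_set_le_delta[of "b # replicate m a"] assms(1) by simp
qed

lemma ratio_and_gap_ge:
  fixes x y p q :: real
  assumes "0 < x" "x \<le> p" "0 \<le> q" "q \<le> y"
  shows "q / p \<le> y / x \<and> q - p \<le> y - x"
proof
  show "q / p \<le> y / x"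
    using assms by (intro frac_le) auto
qed (use assms in linarith)

lemma delta_Cons_replicate_vs_replicate:
  assumes "a \<noteq> b" "0 < n" "0 < m"
  shows "2 \<le> delta (b # replicate m a) / delta (replicate n a)
       \<and> 1 \<le> delta (b # replicate m a) - delta (replicate n a)"
  using ratio_and_gap_ge[OF delta_pos delta_replicate_le _ two_le_delta_Cons_replicate] assms
  by simp

lemma sensitivity_sub_ge:
  assumes "T \<in> strs \<Sigma> n" "T' \<in> strs \<Sigma> n" "ed T T' = 1"
    and "r \<le> C T' / C T" "s \<le> C T' - C T"
  shows "ereal r \<le> MS_sub C \<Sigma> n \<and> ereal s \<le> AS_sub C \<Sigma> n"
proof -
  have "(T, T') \<in> {(T, T'). T \<in> strs \<Sigma> n \<and> T' \<in> strs \<Sigma> n \<and> ed T T' = 1}"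
    using assms by simp
  then show ?thesis
    unfolding MS_sub_def AS_sub_def using assms(4,5)
    by (auto intro!: SUP_upper2[where i = "(T, T')"])
qed

lemma sensitivity_ins_ge:
  assumes "T \<in> strs \<Sigma> n" "T' \<in> strs \<Sigma> (n + 1)" "ed T T' = 1"
    and "r \<le> C T' / C T" "s \<le> C T' - C T"
  shows "ereal r \<le> MS_ins C \<Sigma> n \<and> ereal s \<le> AS_ins C \<Sigma> n"
proof -
  have "(T, T') \<in> {(T, T'). T \<in> strs \<Sigma> n \<and> T' \<in> strs \<Sigma> (n + 1) \<and> ed T T' = 1}"
    using assms by simp
  then show ?thesis
    unfolding MS_ins_def AS_ins_def using assms(4,5)
    by (auto intro!: SUP_upper2[where i = "(T, T')"])
qed

lemma sensitivity_del_ge: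
  assumes "T \<in> strs \<Sigma> n" "T' \<in> strs \<Sigma> (n - 1)" "ed T T' = 1"
    and "r \<le> C T' / C T" "s \<le> C T' - C T"
  shows "ereal r \<le> MS_del C \<Sigma> n \<and> ereal s \<le> AS_del C \<Sigma> n"
proof -
  have "(T, T') \<in> {(T, T'). T \<in> strs \<Sigma> n \<and> T' \<in> strs \<Sigma> (n - 1) \<and> ed T T' = 1}"
    using assms by simp
  then show ?thesis
    unfolding MS_del_def AS_del_def using assms(4,5)
    by (auto intro!: SUP_upper2[where i = "(T, T')"])
qed

lemma sensitivity_sub_delta_ge:
  assumes "a \<in> \<Sigma>" "b \<in> \<Sigma>" "a \<noteq> b" "2 \<le> n"
  shows "2 \<le> MS_sub delta \<Sigma> n \<and> 1 \<le> AS_sub delta \<Sigma> n"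
proof -
  have T: "replicate n a = a # replicate (n - 1) a"
    using assms(4) by (simp add: replicate_Suc[symmetric])
  have "replicate n a \<in> strs \<Sigma> n" "b # replicate (n - 1) a \<in> strs \<Sigma> n"
    using assms by (auto simp: strs_def)
  moreover have "ed (replicate n a) (b # replicate (n - 1) a) = 1"
    unfolding T using ed_substitute[OF assms(3), of "[]"] by simp
  ultimately have "ereal 2 \<le> MS_sub delta \<Sigma> n \<and> ereal 1 \<le> AS_sub delta \<Sigma> n"
    by (rule sensitivity_sub_ge)
      (use delta_Cons_replicate_vs_replicate[of a b n "n - 1"] assms in auto)
  then show ?thesis
    by (simp add: one_ereal_def)
qed

lemma sensitivity_ins_delta_ge:
  assumes "a \<in> \<Sigma>" "b \<in> \<Sigma>" "a \<noteq> b" "1 \<le> n"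
  shows "2 \<le> MS_ins delta \<Sigma> n \<and> 1 \<le> AS_ins delta \<Sigma> n"
proof -
  have "replicate n a \<in> strs \<Sigma> n" "b # replicate n a \<in> strs \<Sigma> (n + 1)"
    using assms by (auto simp: strs_def)
  moreover have "ed (replicate n a) (b # replicate n a) = 1"
    using ed_insert[of "[]"] by simp
  ultimately have "ereal 2 \<le> MS_ins delta \<Sigma> n \<and> ereal 1 \<le> AS_ins delta \<Sigma> n"
    by (rule sensitivity_ins_ge)
      (use delta_Cons_replicate_vs_replicate[of a b n n] assms in auto)
  then show ?thesis
    by (simp add: one_ereal_def)
qed

definition window :: "(nat \<Rightarrow> 'b) \<Rightarrow> nat \<Rightarrow> nat \<Rightarrow> 'b list" where
  "window g k i = map (\<lambda>x. g (i + x)) [0..<k]"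

lemma Substr_map_upt: "Substr (map g [0..<n]) k = card (window g k ` {i. i + k \<le> n})"
proof -
  have "take k (drop i (map g [0..<n])) = window g k i" if "i + k \<le> n" for i
    using that by (intro nth_equalityI) (auto simp: window_def)
  then have "{take k (drop i (map g [0..<n])) | i. i + k \<le> length (map g [0..<n])}
      = window g k ` {i. i + k \<le> n}"
    by (auto simp: image_def) metis
  then show ?thesis
    unfolding Substr_def by simp
qed

text \<open>\<^term>\<open>map (block M L) [0..<n]\<close> is the bit string \<open>0\<^sup>M 011011\<dots>\<close> whose
  \<open>011\<close>-periodic part has length \<open>L\<close>, padded with zeros.\<close>
definition block :: "nat \<Rightarrow> nat \<Rightarrow> nat \<Rightarrow> bool" where
  "block M L i \<longleftrightarrow> M \<le> i \<and> i < M + L \<and> (i - M) mod 3 \<noteq> 0"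

lemma not_block_ge:
  assumes "L mod 3 = 1" "M + L \<le> Suc i"
  shows "\<not> block M L i"
proof (cases "i = M + L - 1")
  case True
  have "L \<noteq> 0"
    using assms(1) by auto
  then have "i - M = L - 1"
    using True by linarith
  moreover have "(L - 1) mod 3 = 0"
    using assms(1) by presburger
  ultimately show ?thesis
    by (simp add: block_def)
qed (use assms in \<open>auto simp: block_def\<close>)

lemma window_block_cases:
  assumes L: "L mod 3 = 1" and m: "2 \<le> m"
  shows "window (block M L) m i \<in> (\<lambda>d. window (block d L) m 0) ` {1..m-1}
           \<union> (\<lambda>e. window (block 0 L) m (L - e)) ` {2..m-1}
           \<union> window (\<lambda>x. x mod 3 \<noteq> 0) m ` {0, 1, 2}"
    (is "?w i \<in> _")
proof -
  consider (zeros) "\<And>x. x < m \<Longrightarrow> \<not> block M L (i + x)" | (entering) "i < M" "M - i \<le> m - 1"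
    | (inner) "M \<le> i" "i + m \<le> M + L" | (leaving) "M \<le> i" "M + L < i + m" "2 \<le> M + L - i"
  proof (cases "i < M")
    case True
    then show ?thesis
      using that(1,2) by (cases "M - i \<le> m - 1") (auto simp: block_def)
  next
    case False
    have "\<not> block M L (i + x)" if "M + L \<le> Suc i" for x
      using not_block_ge[OF L] that by simp
    with False show ?thesis
      using that(1,3,4) by (cases "i + m \<le> M + L"; cases "2 \<le> M + L - i") auto
  qed
  then show ?thesis
  proof cases
    case zeros
    then have "?w i = window (block (m - 1) L) m 0"
      by (auto simp: window_def block_def)
    then show ?thesis
      using m by auto
  next
    case entering
    then have "?w i = window (block (M - i) L) m 0"
      by (auto simp: window_def block_def add.commute intro!: map_cong)
    then show ?thesis
      using entering by auto
  next
    case inner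
    then have "?w i = window (\<lambda>x. x mod 3 \<noteq> 0) m ((i - M) mod 3)"
      by (auto simp: window_def block_def mod_add_left_eq intro!: map_cong)
    moreover have "(i - M) mod 3 \<in> {0, 1, 2}"
      by auto
    ultimately show ?thesis
      by (metis UnI2 image_eqI)
  next
    case leaving
    define e where "e = M + L - i"
    have "?w i = window (block 0 L) m (L - e)"
      using leaving by (auto simp: e_def window_def block_def intro!: map_cong)
    moreover have "e \<in> {2..m-1}"
      using leaving by (auto simp: e_def)
    ultimately show ?thesis
      by (metis UnI1 UnI2 image_eqI)
  qed
qed

lemma card_windows_block_le:
  assumes L: "L mod 3 = 1" and m: "1 \<le> m"
  shows "card (window (block M L) m ` A) \<le> 2 * m"
proof (cases "m = 1")
  case True
  then have "window (block M L) m ` A \<subseteq> {[False], [True]}"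
    unfolding window_def by auto
  then have "card (window (block M L) m ` A) \<le> card {[False], [True]}"
    by (rule card_mono[rotated]) simp
  then show ?thesis
    using True by simp
next
  case False
  let ?entering = "(\<lambda>d. window (block d L) m 0) ` {1..m-1}"
  let ?leaving = "(\<lambda>e. window (block 0 L) m (L - e)) ` {2..m-1}"
  let ?inner = "window (\<lambda>x. x mod 3 \<noteq> 0) m ` {0, 1, 2}"
  have "card (window (block M L) m ` A) \<le> card (?entering \<union> ?leaving \<union> ?inner)"
    using window_block_cases[OF L, of m M] False m by (intro card_mono) auto
  also have "\<dots> \<le> card ?entering + card ?leaving + card ?inner"
    by (meson card_Un_le add_right_mono order_trans)
  also have "\<dots> \<le> card {1..m-1} + card {2..m-1} + card {0::nat, 1, 2}"
    by (intro add_mono card_image_le) auto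
  also have "\<dots> \<le> 2 * m"
    using False m by simp
  finally show ?thesis .
qed

lemma delta_block_le:
  assumes "L mod 3 = 1" "0 < n"
  shows "delta (map (block M L) [0..<n]) \<le> 2"
proof (rule delta_leI)
  fix m :: nat assume "1 \<le> m"
  then have "Substr (map (block M L) [0..<n]) m \<le> 2 * m"
    unfolding Substr_map_upt by (rule card_windows_block_le[OF assms(1)])
  then show "real (Substr (map (block M L) [0..<n]) m) \<le> 2 * real m"
    by simp
qed (use assms in auto)

definition skip :: "nat \<Rightarrow> nat \<Rightarrow> nat" where
  "skip p i = (if i < p then i else Suc i)"

lemma ed_map_upt_skip:
  assumes "p < n"
  shows "ed (map g [0..<n]) (map (g \<circ> skip p) [0..<n - 1]) = 1"
proof -
  have upt_split: "[0..<m] = [0..<p] @ [p..<m]" if "p \<le> m" for m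
    using upt_add_eq_append[of 0 p "m - p"] that by simp
  have "map g [0..<n] = map g [0..<p] @ g p # map g [Suc p..<n]"
    using assms upt_split[of n] by (simp add: upt_conv_Cons)
  moreover have "map (g \<circ> skip p) [0..<n - 1] = map g [0..<p] @ map g [Suc p..<n]"
  proof -
    have "map (g \<circ> skip p) [p..<n - 1] = map g (map Suc [p..<n - 1])"
      by (simp add: skip_def)
    also have "map Suc [p..<n - 1] = [Suc p..<n]"
      using assms by (simp add: map_Suc_upt)
    finally have "map (g \<circ> skip p) [p..<n - 1] = map g [Suc p..<n]" .
    moreover have "map (g \<circ> skip p) [0..<p] = map g [0..<p]"
      by (simp add: skip_def)
    ultimately show ?thesis
      using assms upt_split[of "n - 1"] by simp
  qed
  ultimately show ?thesis
    by (simp add: ed_delete)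
qed

text \<open>The bit string \<^term>\<open>map (block k (6 * k + 1)) [0..<n]\<close> with its zero at position
  \<open>4 * k\<close> deleted: \<open>0\<^sup>k (011)\<^sup>k 11 (011)\<^sup>k\<^sup>-\<^sup>1 0\<dots>\<close>. The deletion creates the only
  occurrence of \<open>1111\<close>, at positions \<open>4 * k - 2, \<dots>, 4 * k + 1\<close>.\<close>
definition cut_block :: "nat \<Rightarrow> nat \<Rightarrow> bool" where
  "cut_block k = block k (6 * k + 1) \<circ> skip (4 * k)"

lemma cut_block_add_iff:
  "cut_block k (k + q) \<longleftrightarrow>
     (q < 3 * k \<and> q mod 3 \<noteq> 0) \<or> (3 * k \<le> q \<and> q < 6 * k \<and> (q + 1) mod 3 \<noteq> 0)"
  unfolding cut_block_def block_def skip_def by auto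

lemma not_cut_block_le: "i \<le> k \<Longrightarrow> \<not> cut_block k i"
  unfolding cut_block_def block_def skip_def by auto

lemma not_cut_block_gt:
  assumes "7 * k - 2 < i"
  shows "\<not> cut_block k i"
proof (cases "i \<le> k")
  case False
  then obtain q where q: "i = k + q"
    by (metis le_add_diff_inverse nat_le_linear)
  then have "q = 6 * k - 1 \<or> 6 * k \<le> q"
    using assms by linarith
  then have "\<not> (q < 3 * k \<and> q mod 3 \<noteq> 0) \<and> \<not> (3 * k \<le> q \<and> q < 6 * k \<and> (q + 1) mod 3 \<noteq> 0)"
    using assms q by (auto simp: Suc_diff_Suc)
  then show ?thesis
    unfolding q cut_block_add_iff by blast
qed (rule not_cut_block_le)

lemma cut_block_Suc: "1 \<le> k \<Longrightarrow> cut_block k (Suc k)"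
  unfolding cut_block_def block_def skip_def by auto

lemma cut_block_last:
  assumes "1 \<le> k"
  shows "cut_block k (7 * k - 2)"
proof -
  have shift: "7 * k - 2 = k + (6 * k - 2)"
    using assms by linarith
  show ?thesis
    unfolding shift cut_block_add_iff using assms by presburger
qed

lemma cut_block_four_ones:
  assumes "1 \<le> k" "t < 4"
  shows "cut_block k (4 * k - 2 + t)"
proof -
  have shift: "4 * k - 2 + t = k + (3 * k - 2 + t)"
    using assms by linarith
  show ?thesis
    unfolding shift cut_block_add_iff using assms by presburger
qed

lemma cut_block_four_ones_unique:
  assumes "\<And>t. t < 4 \<Longrightarrow> cut_block k (i + t)"
  shows "i = 4 * k - 2"
proof -
  have "k < i"
    using assms[of 0] not_cut_block_le[of i k] by force
  then obtain q where q: "i = k + q"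
    using less_imp_add_positive by blast
  have "cut_block k (k + (q + t))" if "t < 4" for t
    using assms[OF that] q by (simp add: add.assoc)
  from this[of 0] this[of 1] this[of 2] this[of 3] have "q = 3 * k - 2"
    unfolding cut_block_add_iff by presburger
  then show ?thesis
    using q \<open>k < i\<close> by linarith
qed

lemma cut_block_one_of_two:
  assumes "4 * k \<le> i" "i + 1 \<le> 7 * k - 2"
  shows "cut_block k i \<or> cut_block k (i + 1)"
proof -
  obtain q where q: "i = k + q"
    using assms(1) le_Suc_ex[of k i] by fastforce
  have "3 * k \<le> q" "q + 1 < 6 * k"
    using assms q by linarith+
  then have "cut_block k (k + q) \<or> cut_block k (k + (q + 1))"
    unfolding cut_block_add_iff by presburger
  then show ?thesis
    using q by (simp add: add.assoc)
qed

lemma window_eqD: "window g k i = window g k j \<Longrightarrow> x < k \<Longrightarrow> g (i + x) = g (j + x)"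
  by (drule arg_cong[where f = "\<lambda>w. w ! x"]) (simp add: window_def)

lemma window_cut_block_eq_middle:
  assumes k: "4 \<le> k" and j: "j \<in> {3*k+2..4*k-2}"
    and eq: "window (cut_block k) k i = window (cut_block k) k j"
  shows "i = j"
proof -
  define x where "x = 4 * k - 2 - j"
  have x: "x + 3 < k" "j + x = 4 * k - 2"
    using j k unfolding x_def by auto
  have "cut_block k (i + x + t)" if "t < 4" for t
  proof -
    have "j + (x + t) = 4 * k - 2 + t"
      using x by simp
    then show ?thesis
      using window_eqD[OF eq, of "x + t"] cut_block_four_ones[of k t] k that x
      by (simp add: add.assoc)
  qed
  then have "i + x = 4 * k - 2"
    by (rule cut_block_four_ones_unique) (simp add: add.assoc)
  then show ?thesis
    using x by linarith
qed

lemma window_cut_block_neq_outer: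
  assumes k: "4 \<le> k" and ij: "i < j"
    and i: "i \<in> {2..k-1} \<union> {6*k-1..7*k-3}" and j: "j \<in> {2..k-1} \<union> {6*k-1..7*k-3}"
  shows "window (cut_block k) k i \<noteq> window (cut_block k) k j"
proof
  assume eq: "window (cut_block k) k i = window (cut_block k) k j"
  consider (left) "j \<in> {2..k-1}" | (right) "i \<in> {6*k-1..7*k-3}"
    | (across) "i \<in> {2..k-1}" "j \<in> {6*k-1..7*k-3}"
    using i j ij by auto
  then show False
  proof cases
    case left
    define x where "x = Suc k - j"
    have "x < k" "j + x = Suc k" "i + x \<le> k"
      using left ij unfolding x_def by auto
    then show False
      using window_eqD[OF eq] cut_block_Suc[of k] not_cut_block_le[of "i + x" k] k by force
  next
    case right
    define x where "x = 7 * k - 2 - i"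
    have "x < k" "i + x = 7 * k - 2" "7 * k - 2 < j + x"
      using right ij k unfolding x_def by auto
    then show False
      using window_eqD[OF eq] cut_block_last[of k] not_cut_block_gt[of k "j + x"] k by force
  next
    case across
    have "cut_block k j \<or> cut_block k (j + 1)"
      using across k by (intro cut_block_one_of_two) auto
    moreover have "\<not> cut_block k i" "\<not> cut_block k (i + 1)"
      using across by (auto intro!: not_cut_block_le)
    ultimately show False
      using window_eqD[OF eq, of 0] window_eqD[OF eq, of 1] k by auto
  qed
qed

text \<open>The three ranges are the start positions of the windows that meet the leading
  zeros, that contain \<open>1111\<close>, and that meet the trailing zeros.\<close>
lemma inj_on_window_cut_block:
  assumes k: "4 \<le> k"
  shows "inj_on (window (cut_block k) k) ({2..k-1} \<union> {3*k+2..4*k-2} \<union> {6*k-1..7*k-3})"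
proof (rule inj_onI)
  fix i j
  assume i: "i \<in> {2..k-1} \<union> {3*k+2..4*k-2} \<union> {6*k-1..7*k-3}"
    and j: "j \<in> {2..k-1} \<union> {3*k+2..4*k-2} \<union> {6*k-1..7*k-3}"
    and eq: "window (cut_block k) k i = window (cut_block k) k j"
  show "i = j"
  proof (cases "i \<in> {3*k+2..4*k-2} \<or> j \<in> {3*k+2..4*k-2}")
    case True
    then show ?thesis
      using window_cut_block_eq_middle[OF k _ eq] window_cut_block_eq_middle[OF k _ eq[symmetric]]
      by blast
  next
    case False
    with i j have "i \<in> {2..k-1} \<union> {6*k-1..7*k-3}" "j \<in> {2..k-1} \<union> {6*k-1..7*k-3}"
      by auto
    then show ?thesis
      using window_cut_block_neq_outer[OF k] eq by (metis linorder_neqE_nat)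
  qed
qed

lemma card_windows_cut_block_ge:
  assumes k: "4 \<le> k" and n: "8 * k \<le> n"
  shows "3 * k - 6 \<le> card (window (cut_block k) k ` {i. i + k \<le> n})"
proof -
  define S where "S = {2..k-1} \<union> {3*k+2..4*k-2} \<union> {6*k-1..7*k-3}"
  have "card S = card ({2..k-1} \<union> {3*k+2..4*k-2}) + card {6*k-1..7*k-3}"
    unfolding S_def using k by (intro card_Un_disjoint) auto
  also have "card ({2..k-1} \<union> {3*k+2..4*k-2}) = card {2..k-1} + card {3*k+2..4*k-2}"
    using k by (intro card_Un_disjoint) auto
  finally have "3 * k - 6 = card S"
    using k by simp
  also have "\<dots> = card (window (cut_block k) k ` S)"
    using inj_on_window_cut_block[OF k] by (simp add: S_def card_image)
  also have "\<dots> \<le> card (window (cut_block k) k ` {i. i + k \<le> n})"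
  proof (intro card_mono finite_imageI image_mono)
    show "finite {i. i + k \<le> n}"
      by (rule finite_subset[of _ "{..n}"]) auto
    show "S \<subseteq> {i. i + k \<le> n}"
      using k n by (auto simp: S_def)
  qed
  finally show ?thesis .
qed

lemma delta_cut_block_ge:
  assumes k: "4 \<le> k" and n: "8 * k \<le> n"
  shows "3 - 6 / real k \<le> delta (map (cut_block k) [0..<n])"
proof -
  have "3 - 6 / real k = real (3 * k - 6) / real k"
    using k by (simp add: field_simps)
  also have "\<dots> \<le> real (Substr (map (cut_block k) [0..<n]) k) / real k"
    using card_windows_cut_block_ge[OF assms] unfolding Substr_map_upt
    by (intro divide_right_mono) auto
  also have "\<dots> \<le> delta (map (cut_block k) [0..<n])"
    using k n by (intro Substr_div_le_delta) auto
  finally show ?thesis .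
qed

lemma sensitivity_del_delta_ge:
  assumes ab: "a \<in> \<Sigma>" "b \<in> \<Sigma>" "a \<noteq> b" and k: "4 \<le> k" and n: "8 * k + 1 \<le> n"
  shows "ereal ((3 - 6 / real k) / 2) \<le> MS_del delta \<Sigma> n \<and> ereal (1 - 6 / real k) \<le> AS_del delta \<Sigma> n"
proof -
  define h where "h \<beta> = (if \<beta> then b else a)" for \<beta>
  have "inj h"
    using ab(3) by (auto simp: inj_def h_def)
  define w where "w = map (block k (6 * k + 1)) [0..<n]"
  define w' where "w' = map (cut_block k) [0..<n - 1]"
  have strs: "map h w \<in> strs \<Sigma> n" "map h w' \<in> strs \<Sigma> (n - 1)"
    using ab(1,2) by (auto simp: strs_def h_def w_def w'_def)
  have ed: "ed (map h w) (map h w') = 1"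
    using ed_map_upt_skip[of "4 * k" n "h \<circ> block k (6 * k + 1)"] n
    by (simp add: w_def w'_def cut_block_def comp_assoc)
  have "(6 * k + 1) mod 3 = 1"
    by presburger
  then have "delta w \<le> 2"
    unfolding w_def using n by (intro delta_block_le) auto
  moreover have "0 < delta w"
    using n by (intro delta_pos) (simp add: w_def)
  moreover have "3 - 6 / real k \<le> delta w'"
    unfolding w'_def using n by (intro delta_cut_block_ge[OF k]) simp
  moreover have "0 \<le> 3 - 6 / real k"
    using k by (simp add: field_simps)
  ultimately have "(3 - 6 / real k) / 2 \<le> delta w' / delta w \<and> (3 - 6 / real k) - 2 \<le> delta w' - delta w"
    by (intro ratio_and_gap_ge)
  then show ?thesis
    by (intro sensitivity_del_ge[OF strs ed]) (auto simp: delta_map_inj[OF \<open>inj h\<close>])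
qed

lemma liminf_ge_of_tendsto:
  fixes f :: "nat \<Rightarrow> ereal" and b :: "nat \<Rightarrow> real"
  assumes "\<And>k. K \<le> k \<Longrightarrow> eventually (\<lambda>n. ereal (b k) \<le> f n) sequentially" and "b \<longlonglongrightarrow> c"
  shows "ereal c \<le> liminf f"
proof (rule LIMSEQ_le_const2)
  show "(\<lambda>k. ereal (b k)) \<longlonglongrightarrow> ereal c"
    using assms(2) by simp
  show "\<exists>N. \<forall>k\<ge>N. ereal (b k) \<le> liminf f"
    using assms(1) by (blast intro: Liminf_bounded)
qed

theorem mainTheorem1:
  fixes \<Sigma> :: "'a set"
  assumes "\<exists>a\<in>\<Sigma>. \<exists>b\<in>\<Sigma>. a \<noteq> b"
  shows "(\<forall>n\<ge>2. MS_sub delta \<Sigma> n \<ge> 2 \<and> AS_sub delta \<Sigma> n \<ge> 1)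
       \<and> (\<forall>n\<ge>1. MS_ins delta \<Sigma> n \<ge> 2 \<and> AS_ins delta \<Sigma> n \<ge> 1)
       \<and> liminf (\<lambda>n. MS_del delta \<Sigma> n) \<ge> ereal (3/2)
       \<and> liminf (\<lambda>n. AS_del delta \<Sigma> n) \<ge> 1"
proof -
  obtain a b where ab: "a \<in> \<Sigma>" "b \<in> \<Sigma>" "a \<noteq> b"
    using assms by blast
  have "\<forall>\<^sub>F n in sequentially. ereal ((3 - 6 / real k) / 2) \<le> MS_del delta \<Sigma> n"
    and "\<forall>\<^sub>F n in sequentially. ereal (1 - 6 / real k) \<le> AS_del delta \<Sigma> n"
    if "4 \<le> k" for k
    using sensitivity_del_delta_ge[OF ab that] unfolding eventually_sequentially by blast+
  then have "ereal (3 / 2) \<le> liminf (\<lambda>n. MS_del delta \<Sigma> n)"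
    and "ereal 1 \<le> liminf (\<lambda>n. AS_del delta \<Sigma> n)"
    by (auto intro!: liminf_ge_of_tendsto[where K = 4] tendsto_eq_intros)
  then show ?thesis
    using sensitivity_sub_delta_ge[OF ab] sensitivity_ins_delta_ge[OF ab]
    by (simp add: one_ereal_def)
qed

end
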